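(* Let $G$ be the $n\times n$ real matrix with entries $G_{ij}=\frac1p\,\sigma^{\,i+j}(x)$ for $0\le i,j\le n-1$ (exponents of $\sigma$ may be read modulo $n$, since $\sigma^n(x)=x$). Then $G$ is orthogonal: $GG^T=G^TG=I_n$.
   Context: Let $n>1$ be an odd integer and $p$ a prime with $p\equiv 1 \pmod n$. Let $\zeta_p=e^{2\pi i/p}$, let $r$ be a primitive root modulo $p$, and let $\sigma$ be the automorphism of $\mathbb{Q}(\zeta_p)$ with $\sigma(\zeta_p)=\zeta_p^r$. Let $\mathbb{K}=\{y\in\mathbb{Q}(\zeta_p):\sigma^n(y)=y\}$; it is a totally real field of degree $n$, contained in $\mathbb{R}$ via $\mathbb{Q}(\zeta_p)\subset\mathbb{C}$, and its embeddings into $\mathbb{R}$ are the restrictions of $\sigma^0,\dots,\sigma^{n-1}$. Let $\alpha=\prod_{j=0}^{(p-3)/2}(1-\zeta_p^{r^j})$, let $\lambda$ be an integer with $\lambda(r-1)\equiv1\pmod p$, let $z=\zeta_p^{\lambda}\alpha(1-\zeta_p)$, and let $x=\mathrm{Tr}_{\mathbb{Q}(\zeta_p)/\mathbb{K}}(z)=\sum_{j=1}^{(p-1)/n}\sigma^{jn}(z)\in\mathcal{O}_\mathbb{K}$. *)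

theory Defs
  imports "HOL-Analysis.Analysis" "HOL-Number_Theory.Number_Theory"
begin

definition zeta :: "nat \<Rightarrow> complex" where
  "zeta p = cis (2 * pi / real p)"

text \<open>The element z = zeta^lambda * alpha * (1 - zeta) written as a rational expression
  in an argument w (substituted for zeta), so that the automorphism sigma^k, which sends
  zeta to zeta^(r^k), acts by substituting w := zeta^(r^k).\<close>
definition z_expr :: "nat \<Rightarrow> nat \<Rightarrow> int \<Rightarrow> complex \<Rightarrow> complex" where
  "z_expr p r lam w =
     w powi lam * (\<Prod>j\<in>{0..(p - 3) div 2}. (1 - w ^ (r ^ j))) * (1 - w)"

definition sigma_z :: "nat \<Rightarrow> nat \<Rightarrow> int \<Rightarrow> nat \<Rightarrow> complex" where
  "sigma_z p r lam k = z_expr p r lam (zeta p ^ (r ^ k))"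

definition sigma_x :: "nat \<Rightarrow> nat \<Rightarrow> nat \<Rightarrow> int \<Rightarrow> nat \<Rightarrow> complex" where
  "sigma_x n p r lam k = (\<Sum>j=1..(p - 1) div n. sigma_z p r lam (j * n + k))"

definition Gmat :: "nat \<Rightarrow> nat \<Rightarrow> nat \<Rightarrow> int \<Rightarrow> nat \<Rightarrow> nat \<Rightarrow> complex" where
  "Gmat n p r lam i j = sigma_x n p r lam (i + j) / of_nat p"

end

theory Submission
  imports Defs "HOL-Computational_Algebra.Polynomial"
begin

text \<open>Write g t = \<sigma>^t(\<zeta>) = \<zeta>^(r^t), a sequence of period q = p - 1 with g (t + 1) = (g t)^r, and let
  h = q / 2, so that g (t + h) = 1 / g t. Then \<sigma>^t(z) = W t * (1 - g t) with
  W t = (g t)^\<lambda> * \<Prod>j<h. (1 - g (t + j)), and the choice \<lambda>(r - 1) = 1 makes W alternate: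
  W (t + 1) = - W t. Hence \<sigma>^t(z) = (-1)^t W 0 (1 - g t), and W 0^2 = (-1)^h p because
  \<Prod>t<q. (1 - g t) = p.

  Expanding a row inner product of G over the traces reduces it to sums
  \<Sum>t<q. (1 - g t)(1 - g (t + D)), which equal p or 2p according as D \<noteq> h or D = h modulo q,
  since \<Sum>t<q. (g t)^c is q or -1 according as p divides c or not. The signs (-1)^t, with n odd,
  make the contributions p cancel in pairs; the only surviving term, D = h, occurs on the diagonal
  and contributes W 0^2 (-1)^h p = p^2.\<close>

lemma power_eq_power_mod:
  fixes w :: "'a::monoid_mult"
  assumes "w ^ p = 1"
  shows "w ^ a = w ^ (a mod p)"
proof -
  have "w ^ a = w ^ (p * (a div p) + a mod p)"
    by simp
  also have "\<dots> = (w ^ p) ^ (a div p) * w ^ (a mod p)"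
    by (simp only: power_add power_mult)
  finally have "w ^ a = (w ^ p) ^ (a div p) * w ^ (a mod p)" .
  with assms show ?thesis by simp
qed

lemma power_int_eq_power_mod:
  fixes w :: "'a::division_ring"
  assumes "w ^ p = 1" and "p > 0"
  shows "w powi l = w ^ nat (l mod int p)"
proof -
  have "w \<noteq> 0"
    using assms by (auto simp: power_0_left)
  then have "w powi l = w powi (int p * (l div int p)) * w powi (l mod int p)"
    by (metis mult_div_mod_eq power_int_add)
  also have "w powi (int p * (l div int p)) = (w powi int p) powi (l div int p)"
    by (simp add: power_int_mult)
  also have "w powi int p = 1"
    using assms(1) by simp
  finally show ?thesis
    using assms(2) by (simp add: power_int_def)
qed

lemma sum_shift_periodic:
  fixes F :: "nat \<Rightarrow> 'a::ab_group_add"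
  assumes "\<And>t. F (t + q) = F t"
  shows "(\<Sum>t<q. F (c + t)) = (\<Sum>t<q. F t)"
proof (induction c)
  case (Suc c)
  have "(\<Sum>t<Suc q. F (c + t)) = F c + (\<Sum>t<q. F (Suc c + t))"
    by (subst sum.lessThan_Suc_shift) simp
  moreover have "(\<Sum>t<Suc q. F (c + t)) = (\<Sum>t<q. F (c + t)) + F c"
    using assms[of c] by (simp add: add.commute)
  ultimately show ?case
    using Suc by (simp add: add.commute)
qed simp

lemma sum_blocks_periodic:
  fixes F :: "nat \<Rightarrow> 'a::ab_group_add"
  assumes "\<And>t. F (t + n * f) = F t"
  shows "(\<Sum>j<n. \<Sum>a\<in>{1..f}. F (a * n + j)) = (\<Sum>t<n * f. F t)"
proof -
  have "(\<Sum>j<n. \<Sum>a\<in>{1..f}. F (a * n + j)) = (\<Sum>a<f. \<Sum>j<n. F (n + (a * n + j)))"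
    by (subst sum.swap) (simp add: sum.atLeast1_atMost_eq add.assoc)
  also have "\<dots> = (\<Sum>a<f. \<Sum>t\<in>{a * n..<a * n + n}. F (n + t))"
    using sum.shift_bounds_nat_ivl[of "\<lambda>t. F (n + t)" 0 "a * n" n for a]
    by (simp add: atLeast0LessThan algebra_simps)
  also have "\<dots> = (\<Sum>t<f * n. F (n + t))"
    by (rule sum.nat_group)
  also have "\<dots> = (\<Sum>t<n * f. F t)"
    using sum_shift_periodic[of F "n * f" n] assms by (simp add: mult.commute)
  finally show ?thesis .
qed

lemma sum_alternating_sign: "(\<Sum>b\<in>{1..2 * e}. (-1 :: 'a::ring_1) ^ b) = 0"
  by (induction e) simp_all

lemma eq_0_if_dvd_abs_less:
  fixes x d :: int
  assumes "d dvd x" and "\<bar>x\<bar> < \<bar>d\<bar>"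
  shows "x = 0"
proof (rule ccontr)
  assume "x \<noteq> 0"
  then show False
    using assms dvd_imp_le_int[of x d] by linarith
qed

lemma zeta_power: "p > 0 \<Longrightarrow> zeta p ^ a = exp (2 * of_real pi * \<i> * of_nat a / of_nat p)"
proof -
  have "zeta p ^ a = cis (real a * (2 * pi / real p))"
    unfolding zeta_def by (rule Complex.DeMoivre)
  then show ?thesis
    by (simp add: cis_conv_exp field_simps)
qed

lemma zeta_power_eq_1_iff: "p > 0 \<Longrightarrow> zeta p ^ a = 1 \<longleftrightarrow> p dvd a"
  using complex_root_unity_eq_1[of p a] by (simp add: zeta_power)

lemma zeta_power_eq_iff: "p > 0 \<Longrightarrow> zeta p ^ a = zeta p ^ b \<longleftrightarrow> [a = b] (mod p)"
  using complex_root_unity_eq[of p a b] by (simp add: zeta_power cong_def)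

lemma prod_one_minus_zeta_power:
  assumes "p > 1"
  shows "(\<Prod>u\<in>{1..<p}. 1 - zeta p ^ u) = of_nat p"
proof -
  \<comment> \<open>1 + x + ... + x^(p-1) and the product of the x - \<zeta>^u are monic of degree p - 1 and
    share the p - 1 distinct roots \<zeta>^u; evaluate at 1.\<close>
  define P where "P = (\<Sum>i<p. Polynomial.monom (1::complex) i)"
  define Q where "Q = (\<Prod>u\<in>{1..<p}. [:- (zeta p ^ u), 1:])"
  define A where "A = (\<lambda>u. zeta p ^ u) ` {1..<p}"
  have "inj_on (\<lambda>u. zeta p ^ u) {1..<p}"
    using assms by (auto simp: inj_on_def zeta_power_eq_iff cong_def)
  then have card_A: "card A = p - 1"
    unfolding A_def by (simp add: card_image)
  have coeff_P: "Polynomial.coeff P k = (if k < p then 1 else 0)" for k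
    unfolding P_def coeff_sum by (simp add: coeff_monom)
  have "degree P \<le> p - 1"
    by (rule degree_le) (use coeff_P in auto)
  moreover have degree_Q: "degree Q = p - 1"
    unfolding Q_def by (subst degree_prod_sum_eq) auto
  moreover have "Polynomial.coeff Q (p - 1) = 1"
    using lead_coeff_prod[of "\<lambda>u. [:- (zeta p ^ u), 1:]" "{1..<p}"] degree_Q
    unfolding Q_def by simp
  moreover have "Polynomial.coeff P (p - 1) = 1"
    using coeff_P assms by simp
  moreover have "poly P z = poly Q z" if "z \<in> A" for z
  proof -
    obtain u where u: "u \<in> {1..<p}" "z = zeta p ^ u"
      using \<open>z \<in> A\<close> unfolding A_def by auto
    have "z ^ p = 1"
      using assms unfolding u(2) power_mult[symmetric] by (simp add: zeta_power_eq_1_iff)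
    moreover have "z \<noteq> 1"
      using u assms by (auto simp: zeta_power_eq_1_iff dest: dvd_imp_le)
    ultimately have "poly P z = 0"
      unfolding P_def by (simp add: poly_sum poly_monom geometric_sum)
    moreover have "poly Q z = 0"
      unfolding Q_def poly_prod using u by (auto intro!: prod_zero)
    ultimately show ?thesis by simp
  qed
  ultimately have "P = Q"
    using card_A by (intro poly_eqI_degree_lead_coeff[of P "p - 1" Q A]) auto
  then have "poly P 1 = poly Q 1" by simp
  then show ?thesis
    unfolding P_def Q_def by (simp add: poly_sum poly_monom poly_prod)
qed

lemma residue_primroot_power_bij:
  assumes "prime p" and "residue_primroot p r"
  shows "bij_betw (\<lambda>i. r ^ i mod p) {..<p - 1} {1..<p}"
proof -
  have "{0<..<p} = {1..<p}"
    by auto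
  then show ?thesis
    using residue_primroot_is_generator[of p r] assms prime_gt_1_nat[OF assms(1)]
    by (simp add: totient_prime totatives_prime)
qed

lemma sum_zeta_primroot_power:
  assumes "prime p" and "residue_primroot p r"
  shows "(\<Sum>t<p - 1. (zeta p ^ r ^ t) ^ c) = (if p dvd c then of_nat (p - 1) else -1)"
proof -
  define w where "w = zeta p ^ c"
  have p: "p > 1"
    using assms(1) prime_gt_1_nat by blast
  have "w ^ p = 1"
    using p unfolding w_def power_mult[symmetric] by (simp add: zeta_power_eq_1_iff)
  then have "(\<Sum>t<p - 1. (zeta p ^ r ^ t) ^ c) = (\<Sum>t<p - 1. w ^ (r ^ t mod p))"
    unfolding w_def by (intro sum.cong refl)
      (metis power_eq_power_mod mult.commute power_mult)
  also have "\<dots> = (\<Sum>u\<in>{1..<p}. w ^ u)"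
    using sum.reindex_bij_betw[OF residue_primroot_power_bij[OF assms], of "\<lambda>u. w ^ u"] by simp
  also have "\<dots> = (\<Sum>u<p. w ^ u) - 1"
    using p by (simp add: sum.atLeast_Suc_lessThan lessThan_atLeast0)
  also have "\<dots> = (if p dvd c then of_nat (p - 1) else -1)"
  proof (cases "p dvd c")
    case True
    then have "w = 1"
      using p unfolding w_def by (simp add: zeta_power_eq_1_iff)
    then show ?thesis
      using True p by (simp add: of_nat_diff)
  next
    case False
    then have "w \<noteq> 1"
      using p unfolding w_def by (simp add: zeta_power_eq_1_iff)
    then show ?thesis
      using False \<open>w ^ p = 1\<close> by (simp add: geometric_sum)
  qed
  finally show ?thesis .
qed

lemma prod_one_minus_zeta_primroot_power:
  assumes "prime p" and "residue_primroot p r"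
  shows "(\<Prod>t<p - 1. 1 - zeta p ^ r ^ t) = of_nat p"
proof -
  have p: "p > 1"
    using assms(1) prime_gt_1_nat by blast
  have "(\<Prod>t<p - 1. 1 - zeta p ^ r ^ t) = (\<Prod>t<p - 1. 1 - zeta p ^ (r ^ t mod p))"
    using p by (intro prod.cong refl) (simp add: zeta_power_eq_iff cong_def)
  also have "\<dots> = (\<Prod>u\<in>{1..<p}. 1 - zeta p ^ u)"
    using prod.reindex_bij_betw[OF residue_primroot_power_bij[OF assms], of "\<lambda>u. 1 - zeta p ^ u"]
    by simp
  finally show ?thesis
    using prod_one_minus_zeta_power[OF p] by simp
qed

lemma residue_primroot_half_power:
  assumes "prime p" and "residue_primroot p r" and "p - 1 = 2 * h" and "h > 0"
  shows "p dvd r ^ D + 1 \<longleftrightarrow> [D = h] (mod p - 1)"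
proof -
  have ord: "ord p r = p - 1" and cop: "coprime p r"
    using assms(1,2) by (auto simp: residue_primroot_def totient_prime)
  have "[(r ^ h) ^ 2 = 1] (mod p)"
    using ord ord_divides[of r "h * 2" p] assms(3) by (simp add: power_mult mult.commute)
  then have "int p dvd (int (r ^ h) - 1) * (int (r ^ h) + 1)"
    by (simp add: cong_iff_dvd_diff power2_eq_square algebra_simps flip: cong_int_iff)
  moreover have "\<not> int p dvd int (r ^ h) - 1"
    using ord_minimal[of h p r] ord assms(3,4)
    by (simp add: cong_iff_dvd_diff flip: cong_int_iff)
  ultimately have half: "int p dvd int (r ^ h) + 1"
    using assms(1) by (simp add: prime_dvd_mult_iff)
  have "p dvd r ^ D + 1 \<longleftrightarrow> int p dvd (int (r ^ D) + 1) - (int (r ^ h) + 1)"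
    using dvd_add_left_iff[OF half, of "(int (r ^ D) + 1) - (int (r ^ h) + 1)"]
    by (simp add: add.commute flip: int_dvd_int_iff)
  also have "\<dots> \<longleftrightarrow> [r ^ D = r ^ h] (mod p)"
    by (simp add: cong_iff_dvd_diff flip: cong_int_iff)
  also have "\<dots> \<longleftrightarrow> [D = h] (mod p - 1)"
    using order_divides_expdiff[OF cop] ord by simp
  finally show ?thesis .
qed

locale trace_matrix =
  fixes n p r :: nat and lam :: int
  assumes n_gt_1: "n > 1" and odd_n: "odd n" and prime_p: "prime p" and p_cong_1: "[p = 1] (mod n)"
    and primroot: "residue_primroot p r" and lam_inverse: "[lam * (int r - 1) = 1] (mod int p)"
begin

abbreviation "q \<equiv> p - 1"

definition "f = q div n"

definition "e = f div 2"

abbreviation "h \<equiv> n * e"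

definition "g t = zeta p ^ r ^ t"

lemma p_gt_2: "p > 2"
proof -
  have "n dvd q"
    using p_cong_1 cong_to_1_nat by blast
  have "p \<noteq> 2"
  proof
    assume "p = 2"
    with \<open>n dvd q\<close> have "n dvd 1"
      by simp
    with n_gt_1 show False
      by simp
  qed
  then show ?thesis
    using prime_ge_2_nat[OF prime_p] by linarith
qed

lemma q_eq_n_f: "q = n * f"
  using p_cong_1 cong_to_1_nat unfolding f_def by auto

lemma f_eq_2_e: "f = 2 * e"
proof -
  have "odd p"
    using p_gt_2 prime_p prime_odd_nat by auto
  then have "even q"
    using p_gt_2 by simp
  then have "even (n * f)"
    by (simp only: q_eq_n_f)
  then have "even f"
    using odd_n by simp
  then show ?thesis
    unfolding e_def by simp
qed

lemma q_eq_2_h: "q = 2 * h"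
  using q_eq_n_f f_eq_2_e by simp

lemma e_pos: "e > 0"
  using p_gt_2 q_eq_2_h by (cases e) auto

lemma g_periodic: "g (t + q) = g t"
proof -
  have "[r ^ q = 1] (mod p)"
    using primroot prime_p ord_divides[of r q p] by (simp add: residue_primroot_def totient_prime)
  then have "[r ^ t * r ^ q = r ^ t * 1] (mod p)"
    by (intro cong_mult) auto
  then show ?thesis
    unfolding g_def power_add using p_gt_2 by (simp add: zeta_power_eq_iff)
qed

lemma g_add: "g (t + D) = g t ^ r ^ D"
  unfolding g_def by (simp add: power_add power_mult)

lemma g_ne_1: "g t \<noteq> 1"
proof -
  have "\<not> p dvd r"
    using primroot prime_p by (auto simp: residue_primroot_def prime_imp_coprime_nat)
  then have "\<not> p dvd r ^ t"
    using prime_p prime_dvd_power by blast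
  then show ?thesis
    unfolding g_def using p_gt_2 by (simp add: zeta_power_eq_1_iff)
qed

lemma g_add_h_times_g: "g (t + h) * g t = 1"
proof -
  have "p dvd r ^ h + 1"
    using residue_primroot_half_power[OF prime_p primroot q_eq_2_h, of h] e_pos n_gt_1 by simp
  then have "p dvd r ^ t * (r ^ h + 1)"
    by (rule dvd_mult)
  then show ?thesis
    unfolding g_def using p_gt_2
    by (simp add: zeta_power_eq_1_iff flip: power_add) (simp add: power_add algebra_simps)
qed

lemma sum_g_power: "(\<Sum>t<q. g t ^ c) = (if p dvd c then of_nat q else -1)"
  unfolding g_def by (rule sum_zeta_primroot_power[OF prime_p primroot])

lemma prod_one_minus_g: "(\<Prod>t<q. 1 - g t) = of_nat p"
  unfolding g_def by (rule prod_one_minus_zeta_primroot_power[OF prime_p primroot])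

text \<open>This is where lam enters: g (t + 1) = (g t)^r, and lam * (r - 1) = 1 modulo the order p
  of g t.\<close>
lemma g_Suc_powi: "g (Suc t) powi lam = g t powi lam * g t"
proof -
  have g0: "g t \<noteq> 0"
    unfolding g_def zeta_def by simp
  have gp: "g t ^ p = 1"
    unfolding g_def power_mult[symmetric] using p_gt_2 by (simp add: zeta_power_eq_1_iff)
  have "g (Suc t) powi lam = (g t powi int r) powi lam"
    using g_add[of t 1] by simp
  also have "\<dots> = g t powi (lam + lam * (int r - 1))"
    by (simp only: power_int_mult [symmetric]) (simp add: algebra_simps)
  also have "\<dots> = g t powi lam * g t powi (lam * (int r - 1))"
    using g0 by (simp add: power_int_add)
  also have "g t powi (lam * (int r - 1)) = g t ^ nat ((lam * (int r - 1)) mod int p)"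
    using power_int_eq_power_mod[OF gp] p_gt_2 by simp
  also have "(lam * (int r - 1)) mod int p = 1"
    using lam_inverse p_gt_2 unfolding cong_def by simp
  finally show ?thesis
    by simp
qed

definition "W t = g t powi lam * (\<Prod>j<h. 1 - g (t + j))"

lemma sigma_z_eq_W: "sigma_z p r lam t = W t * (1 - g t)"
proof -
  obtain k where k: "h = Suc k"
    using e_pos n_gt_1 not0_implies_Suc by fastforce
  then have "(p - 3) div 2 = k"
    using q_eq_2_h by simp
  then have "{0..(p - 3) div 2} = {..<h}"
    unfolding k by (simp add: lessThan_Suc_atMost atLeast0AtMost)
  then show ?thesis
    unfolding sigma_z_def z_expr_def W_def
    by (simp add: g_def power_mult[symmetric] power_add)
qed

lemma W_Suc: "W (Suc t) = - W t"
proof -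
  define P where "P = (\<Prod>j<h. 1 - g (t + j))"
  define P' where "P' = (\<Prod>j<h. 1 - g (Suc t + j))"
  have "(1 - g t) * P' = (\<Prod>j<Suc h. 1 - g (t + j))"
    unfolding P'_def by (subst prod.lessThan_Suc_shift) simp
  also have "\<dots> = P * (1 - g (t + h))"
    unfolding P_def by simp
  finally have shift: "(1 - g t) * P' = P * (1 - g (t + h))" .
  have "(1 - g t) * (g t * P') = g t * ((1 - g t) * P')"
    by (simp add: algebra_simps)
  also have "\<dots> = P * (g t - g (t + h) * g t)"
    unfolding shift by (simp add: algebra_simps)
  also have "\<dots> = (1 - g t) * (- P)"
    using g_add_h_times_g[of t] by (simp add: algebra_simps)
  finally have "(1 - g t) * (g t * P') = (1 - g t) * (- P)" .
  moreover have "1 - g t \<noteq> 0"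
    using g_ne_1[of t] by simp
  ultimately have "g t * P' = - P"
    using mult_left_cancel by blast
  then show ?thesis
    unfolding W_def P_def[symmetric] P'_def[symmetric] g_Suc_powi by (simp add: mult.assoc)
qed

lemma W_eq_sign_W_0: "W t = (-1) ^ t * W 0"
  by (induction t) (simp_all add: W_Suc)

lemma W_0_square: "W 0 ^ 2 = (-1) ^ e * of_nat p"
proof -
  have "W 0 * W h = (g h * g 0) powi lam * ((\<Prod>j<h. 1 - g j) * (\<Prod>j<h. 1 - g (h + j)))"
    unfolding W_def by (simp add: power_int_mult_distrib algebra_simps)
  also have "\<dots> = (\<Prod>j<h. 1 - g j) * (\<Prod>j\<in>{h..<h + h}. 1 - g j)"
    using g_add_h_times_g[of 0] prod.shift_bounds_nat_ivl[of "\<lambda>j. 1 - g j" 0 h h]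
    by (simp add: atLeast0LessThan add.commute)
  also have "\<dots> = (\<Prod>j<q. 1 - g j)"
    using prod.atLeastLessThan_concat[of 0 h "h + h" "\<lambda>j. 1 - g j"] q_eq_2_h
    by (simp add: atLeast0LessThan mult_2)
  finally have "W 0 * W h = of_nat p"
    using prod_one_minus_g by simp
  moreover have "(-1 :: complex) ^ h = (-1) ^ e"
    using odd_n by (auto elim!: oddE simp: power_add power_mult)
  ultimately have "(-1) ^ e * W 0 ^ 2 = of_nat p"
    using W_eq_sign_W_0[of h] by (simp add: power2_eq_square algebra_simps)
  then show ?thesis
    by (metis (no_types) minus_one_mult_self mult.assoc mult_1)
qed

abbreviation "S t \<equiv> sigma_z p r lam t"

abbreviation "X k \<equiv> sigma_x n p r lam k"

lemma sigma_z_eq: "S t = (-1) ^ t * W 0 * (1 - g t)"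
  unfolding sigma_z_eq_W W_eq_sign_W_0[of t] by simp

lemma sigma_z_periodic: "S (t + q) = S t"
proof -
  have "(-1 :: complex) ^ (t + q) = (-1) ^ t"
    using q_eq_2_h by (simp add: power_add)
  then show ?thesis
    unfolding sigma_z_eq g_periodic by simp
qed

lemma sigma_x_eq: "X k = (\<Sum>a\<in>{1..f}. S (a * n + k))"
  unfolding sigma_x_def f_def by simp

lemma sigma_x_add_n: "X (k + n) = X k"
proof -
  define T where "T a = S (a * n + k)" for a
  have T_periodic: "T (a + f) = T a" for a
    unfolding T_def using sigma_z_periodic[of "a * n + k"] q_eq_n_f
    by (simp add: algebra_simps)
  have "X (k + n) = (\<Sum>a<f. T (Suc a + 1))"
    using sum.atLeast1_atMost_eq[of "\<lambda>a. S (a * n + (k + n))" f]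
    unfolding sigma_x_eq T_def by (simp add: algebra_simps)
  also have "\<dots> = (\<Sum>a<f. T a)"
    using sum_shift_periodic[of T f 2] T_periodic by (simp add: add.commute)
  also have "\<dots> = (\<Sum>a<f. T (Suc a))"
    using sum_shift_periodic[of T f 1] T_periodic by (simp add: add.commute)
  also have "\<dots> = X k"
    using sum.atLeast1_atMost_eq[of "\<lambda>a. S (a * n + k)" f]
    unfolding sigma_x_eq T_def by simp
  finally show ?thesis .
qed

lemma sigma_x_add_mult_n: "X (k + a * n) = X k"
proof (induction a)
  case (Suc a)
  then show ?case
    using sigma_x_add_n[of "k + a * n"] by (simp add: algebra_simps)
qed simp

lemma sum_one_minus_g_products:
  "(\<Sum>t<q. (1 - g t) * (1 - g (t + D))) = of_nat p * (if [D = h] (mod q) then 2 else 1)"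
proof -
  have not_dvd: "\<not> p dvd r ^ D"
    using g_ne_1[of D] unfolding g_def using p_gt_2 by (simp add: zeta_power_eq_1_iff)
  have "(\<Sum>t<q. (1 - g t) * (1 - g (t + D)))
      = (\<Sum>t<q. 1 - g t ^ 1 - g t ^ r ^ D + g t ^ (r ^ D + 1))"
    unfolding g_add by (intro sum.cong refl) (simp add: algebra_simps)
  also have "\<dots> =
      of_nat q - (\<Sum>t<q. g t ^ 1) - (\<Sum>t<q. g t ^ r ^ D) + (\<Sum>t<q. g t ^ (r ^ D + 1))"
    by (simp add: sum.distrib sum_subtractf)
  also have "\<dots> = of_nat q + 2 + (if p dvd r ^ D + 1 then of_nat q else -1)"
    unfolding sum_g_power using p_gt_2 not_dvd by simp
  also have "p dvd r ^ D + 1 \<longleftrightarrow> [D = h] (mod q)"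
    using residue_primroot_half_power[OF prime_p primroot q_eq_2_h] e_pos n_gt_1 by simp
  finally show ?thesis
    using p_gt_2 by (simp add: of_nat_diff)
qed

lemma minus_one_power_pair:
  "(-1 :: complex) ^ (i + t) * (-1) ^ (b * n + m + t) = (-1) ^ (i + m) * (-1) ^ b"
proof -
  obtain k where k: "n = 2 * k + 1"
    using odd_n oddE by blast
  have exponent: "i + t + (b * n + m + t) = i + m + b + 2 * (t + b * k)"
    unfolding k by (simp add: algebra_simps)
  have "(-1 :: complex) ^ (i + t) * (-1) ^ (b * n + m + t) =
      (-1) ^ (i + m + b) * ((-1) ^ 2) ^ (t + b * k)"
    unfolding power_add[symmetric] exponent by (simp only: power_add power_mult)
  then show ?thesis
    by (simp add: power_add)
qed

lemma sum_sigma_z_products: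
  assumes "i \<le> q"
  shows "(\<Sum>t<q. S (i + t) * S (b * n + (m + t))) =
    W 0 ^ 2 * (-1) ^ (i + m) * (-1) ^ b * of_nat p *
      (if [b * n + m + q - i = h] (mod q) then 2 else 1)"
proof -
  \<comment> \<open>q is added so that subtracting i does not truncate.\<close>
  define D where "D = b * n + m + q - i"
  define G where "G t = (1 - g t) * (1 - g (t + D))" for t
  have G_periodic: "G (t + q) = G t" for t
    unfolding G_def using g_periodic[of t] g_periodic[of "t + D"] by (simp add: algebra_simps)
  have "S (i + t) * S (b * n + (m + t)) = W 0 ^ 2 * (-1) ^ (i + m) * (-1) ^ b * G (i + t)" for t
  proof -
    have "g (b * n + (m + t)) = g (i + t + D)"
      using g_periodic[of "b * n + (m + t)"] assms unfolding D_def by (simp add: algebra_simps)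
    then have "S (i + t) * S (b * n + (m + t)) =
        ((-1) ^ (i + t) * (-1) ^ (b * n + m + t)) * W 0 ^ 2 * G (i + t)"
      unfolding sigma_z_eq G_def by (simp add: power2_eq_square algebra_simps)
    then show ?thesis
      unfolding minus_one_power_pair by (simp add: algebra_simps)
  qed
  then have "(\<Sum>t<q. S (i + t) * S (b * n + (m + t))) =
      W 0 ^ 2 * (-1) ^ (i + m) * (-1) ^ b * (\<Sum>t<q. G (i + t))"
    by (simp add: sum_distrib_left)
  also have "(\<Sum>t<q. G (i + t)) = (\<Sum>t<q. G t)"
    using sum_shift_periodic G_periodic by blast
  finally show ?thesis
    unfolding G_def sum_one_minus_g_products D_def by (simp add: algebra_simps)
qed

lemma n_le_q: "n \<le> q"
  using q_eq_n_f f_eq_2_e e_pos by simp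

lemma cong_h_iff:
  assumes "i < n" and "m < n" and "b \<in> {1..f}"
  shows "[b * n + m + q - i = h] (mod q) \<longleftrightarrow> i = m \<and> b = e"
proof
  assume "i = m \<and> b = e"
  then have "b * n + m + q - i = h + q"
    by (simp add: mult.commute)
  then show "[b * n + m + q - i = h] (mod q)"
    by (simp add: cong_def)
next
  assume "[b * n + m + q - i = h] (mod q)"
  moreover have "int (b * n + m + q - i) - int h = (int b - int e) * int n + (int m - int i) + int q"
    using assms(1) n_le_q by (simp add: of_nat_diff algebra_simps)
  ultimately have dvd_q: "int q dvd (int b - int e) * int n + (int m - int i)"
    by (simp add: cong_iff_dvd_diff dvd_add_left_iff flip: cong_int_iff)
  moreover have q: "int q = int (2 * e) * int n"
    using q_eq_n_f f_eq_2_e by simp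
  ultimately have "int n dvd int m - int i"
    by (metis dvd_add_right_iff dvd_mult_left dvd_trans dvd_triv_right)
  moreover have "\<bar>int m - int i\<bar> < \<bar>int n\<bar>"
    using assms(1,2) by auto
  ultimately have "int m - int i = 0"
    by (rule eq_0_if_dvd_abs_less)
  then have "i = m"
    by simp
  then have "int (2 * e) dvd int b - int e"
    using dvd_q n_gt_1 unfolding q by simp
  moreover have "\<bar>int b - int e\<bar> < \<bar>int (2 * e)\<bar>"
    using assms(3) e_pos f_eq_2_e by auto
  ultimately have "int b - int e = 0"
    by (rule eq_0_if_dvd_abs_less)
  then have "b = e"
    by simp
  with \<open>i = m\<close> show "i = m \<and> b = e" ..
qed

lemma sum_sigma_x_products_unfold:
  "(\<Sum>j<n. X (i + j) * X (m + j)) = (\<Sum>b\<in>{1..f}. \<Sum>t<q. S (i + t) * S (b * n + (m + t)))"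
proof -
  define F where "F t = S (i + t) * X (m + t)" for t
  have X_eq: "X (m + (a * n + j)) = X (m + j)" for a j
    using sigma_x_add_mult_n[of "m + j" a] by (simp add: algebra_simps)
  have "X (i + j) * X (m + j) = (\<Sum>a\<in>{1..f}. F (a * n + j))" for j
    unfolding sigma_x_eq[of "i + j"] sum_distrib_right F_def X_eq by (simp add: add.left_commute)
  then have "(\<Sum>j<n. X (i + j) * X (m + j)) = (\<Sum>j<n. \<Sum>a\<in>{1..f}. F (a * n + j))"
    by simp
  also have "\<dots> = (\<Sum>t<n * f. F t)"
  proof (rule sum_blocks_periodic)
    fix t
    show "F (t + n * f) = F t"
      unfolding F_def q_eq_n_f[symmetric]
      using sigma_z_periodic[of "i + t"] sigma_x_add_mult_n[of "m + t" f] q_eq_n_f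
      by (simp add: add.assoc mult.commute)
  qed
  also have "\<dots> = (\<Sum>t<q. \<Sum>b\<in>{1..f}. S (i + t) * S (b * n + (m + t)))"
    unfolding F_def sigma_x_eq q_eq_n_f by (simp add: sum_distrib_left)
  also have "\<dots> = (\<Sum>b\<in>{1..f}. \<Sum>t<q. S (i + t) * S (b * n + (m + t)))"
    by (rule sum.swap)
  finally show ?thesis .
qed

lemma sum_sigma_x_products:
  assumes "i < n" and "m < n"
  shows "(\<Sum>j<n. X (i + j) * X (m + j)) = (if i = m then of_nat p ^ 2 else 0)"
proof -
  define c where "c = W 0 ^ 2 * of_nat p * (-1) ^ (i + m)"
  have "(\<Sum>t<q. S (i + t) * S (b * n + (m + t))) =
      c * ((-1) ^ b + (if i = m \<and> b = e then (-1) ^ b else 0))" if "b \<in> {1..f}" for b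
    using sum_sigma_z_products[of i b m] cong_h_iff[OF assms that] assms(1) n_le_q
    unfolding c_def by (simp add: algebra_simps)
  then have "(\<Sum>j<n. X (i + j) * X (m + j)) =
      (\<Sum>b\<in>{1..f}. c * ((-1) ^ b + (if i = m \<and> b = e then (-1) ^ b else 0)))"
    unfolding sum_sigma_x_products_unfold by simp
  also have "\<dots> = c * ((\<Sum>b\<in>{1..2 * e}. (-1) ^ b) +
      (\<Sum>b\<in>{1..f}. if i = m \<and> b = e then (-1) ^ b else 0))"
    unfolding f_eq_2_e by (simp only: sum.distrib[symmetric] sum_distrib_left)
  also have "\<dots> = (if i = m then c * (-1) ^ e else 0)"
    using sum_alternating_sign[of e, where 'a = complex] e_pos f_eq_2_e by simp
  also have "\<dots> = (if i = m then of_nat p ^ 2 else 0)"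
    unfolding c_def W_0_square by (simp add: power2_eq_square power_add[symmetric] flip: mult_2)
  finally show ?thesis .
qed

lemma Gmat_rows_orthonormal:
  assumes "i < n" and "k < n"
  shows "(\<Sum>j<n. Gmat n p r lam i j * Gmat n p r lam k j) = (if i = k then 1 else 0)"
proof -
  have "(\<Sum>j<n. Gmat n p r lam i j * Gmat n p r lam k j) =
      (\<Sum>j<n. X (i + j) * X (k + j)) / of_nat p ^ 2"
    unfolding Gmat_def by (simp add: sum_divide_distrib power2_eq_square)
  then show ?thesis
    using sum_sigma_x_products[OF assms] p_gt_2 by simp
qed

end

theorem theorem1:
  fixes n p r :: nat and lam :: int
  assumes "n > 1" and "odd n" and "prime p" and "[p = 1] (mod n)"
    and "residue_primroot p r"
    and "[lam * (int r - 1) = 1] (mod int p)"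
  shows "(\<forall>i<n. \<forall>k<n. (\<Sum>j<n. Gmat n p r lam i j * Gmat n p r lam k j) = (if i = k then 1 else 0))
       \<and> (\<forall>i<n. \<forall>k<n. (\<Sum>j<n. Gmat n p r lam j i * Gmat n p r lam j k) = (if i = k then 1 else 0))"
proof -
  interpret trace_matrix n p r lam
    using assms by unfold_locales
  have "Gmat n p r lam j i = Gmat n p r lam i j" for i j
    by (simp add: Gmat_def add.commute)
  then show ?thesis
    using Gmat_rows_orthonormal by simp
qed

end
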